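(* Let $d_n=2^n\Delta_n+\tfrac12$ for $n\ge0$ and $d_n=0$ for $n<0$. Then for every $n\ge1$, $$d_n-\Big(2-\frac1n\Big)d_{n-1}+\Big(1-\frac1n\Big)d_{n-2}-\Big(4-\frac6n\Big)d_{n-3}+\Big(4-\frac8n\Big)d_{n-4}=0.$$ Consequently, for every $n\ge4$, $$\Delta_n=\frac{1}{n2^n}+\Big(\frac1{2n}-\frac14\Big)\Delta_{n-4}+\Big(\frac12-\frac{3}{4n}\Big)\Delta_{n-3}+\Big(\frac1{4n}-\frac14\Big)\Delta_{n-2}+\Big(1-\frac1{2n}\Big)\Delta_{n-1}.$$
   Context: A fair coin is flipped $n$ times, producing a sequence $x_1,\dots,x_n\in\{H,T\}$ of independent uniformly random outcomes. Alice's score is the number of indices $i\in\{1,\dots,n-1\}$ with $(x_i,x_{i+1})=(H,H)$; Bob's score is the number of indices $i\in\{1,\dots,n-1\}$ with $(x_i,x_{i+1})=(H,T)$. $\Delta_n$ is the probability that Bob's score strictly exceeds Alice's minus the probability that Alice's score strictly exceeds Bob's (so $\Delta_0=0$). *)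

theory Defs
  imports Complex_Main
begin

text \<open>Coin sequences of length n: lists of booleans, True = H, False = T.
  Indices are 0-based: positions i with i + 1 < length xs.\<close>

definition alice_score :: "bool list \<Rightarrow> nat" where
  "alice_score xs = card {i. i + 1 < length xs \<and> xs ! i \<and> xs ! (i + 1)}"

definition bob_score :: "bool list \<Rightarrow> nat" where
  "bob_score xs = card {i. i + 1 < length xs \<and> xs ! i \<and> \<not> xs ! (i + 1)}"

text \<open>Uniform fair-coin probability: count over the 2^n equally likely sequences.\<close>
definition Delta :: "nat \<Rightarrow> real" where
  "Delta n =
     (real (card {xs. length xs = n \<and> bob_score xs > alice_score xs})
      - real (card {xs. length xs = n \<and> alice_score xs > bob_score xs})) / 2 ^ n"

definition d :: "int \<Rightarrow> real" where
  "d n = (if n < 0 then 0 else 2 ^ nat n * Delta (nat n) + 1 / 2)"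

end

theory Submission
  imports Defs
begin

text \<open>Let D be Bob's score minus Alice's. Prepending a coin changes D by -1 (H before H), by +1
  (H before T) or not at all (T first), so the numbers of length-n sequences with a given first
  coin and D = j satisfy a linear recurrence in n. They can be written through the fundamental
  solution G of the two-step recurrence
  G(m, j) = G(m-1, j) + G(m-1, j+1) + G(m-2, j-1) - G(m-2, j+1),
  and so can 2^n \<Delta>_n, the sum of sgn D over all sequences: d_n = G(n, 0) / 2.
  The recurrence for the central values G(n, 0) is proved by creative telescoping: an explicit
  combination of shifts of G with coefficients polynomial in (n, j) satisfies the same homogeneous
  recurrence and vanishes for n < 0, hence vanishes identically; at j = 0 it is the claimed
  recurrence. A second such certificate supplies the relation between G(n, 0) and the boundary
  terms in the recursion for 2^n \<Delta>_n.\<close>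

definition rec_op :: "(int \<Rightarrow> int \<Rightarrow> real) \<Rightarrow> int \<Rightarrow> int \<Rightarrow> real" where
  "rec_op F n j = F n j - F (n - 1) j - F (n - 1) (j + 1) - F (n - 2) (j - 1) + F (n - 2) (j + 1)"

lemma rec_op_eq_0_imp_eq_0:
  assumes neg: "\<And>n j. n < 0 \<Longrightarrow> F n j = 0"
    and rec: "\<And>n j. rec_op F n j = 0"
  shows "F n j = 0"
proof (cases "n < 0")
  case False
  have "F (int k) j = 0" for k j
  proof (induction k arbitrary: j rule: less_induct)
    case (less k)
    have prev: "F (int k - i) j' = 0" if "i \<in> {1, 2}" for i j'
      using less[of "nat (int k - i)"] neg[of "int k - i"] that
      by (cases "int k - i < 0") auto
    show ?case
      using rec[of "int k" j] prev[of 1] prev[of 2] by (simp add: rec_op_def)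
  qed
  with False show ?thesis by (metis nonneg_int_cases not_less)
qed (use neg in auto)

fun green_nat :: "nat \<Rightarrow> int \<Rightarrow> real" where
  "green_nat 0 j = (if j = 0 then 1 else 0)"
| "green_nat (Suc 0) j = green_nat 0 j + green_nat 0 (j + 1)"
| "green_nat (Suc (Suc m)) j =
     green_nat (Suc m) j + green_nat (Suc m) (j + 1) + green_nat m (j - 1) - green_nat m (j + 1)"

definition green :: "int \<Rightarrow> int \<Rightarrow> real" where
  "green m j = (if m < 0 then 0 else green_nat (nat m) j)"

lemma green_neg: "m < 0 \<Longrightarrow> green m j = 0"
  by (simp add: green_def)

lemma rec_op_green: "rec_op green m j = (if m = 0 \<and> j = 0 then 1 else 0)"
proof (cases "m < 2")
  case True
  then consider "m < 0" | "m = 0" | "m = 1" by linarith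
  then show ?thesis by cases (simp_all add: rec_op_def green_def)
next
  case False
  then obtain k where k: "m = int (Suc (Suc k))"
    by (intro that[of "nat (m - 2)"]) simp
  then have "m - 1 = int (Suc k)" "m - 2 = int k" by auto
  then show ?thesis using k unfolding rec_op_def green_def by (simp only: nat_int) simp
qed

lemma green_rec:
  "m \<noteq> 0 \<Longrightarrow> green m j = green (m - 1) j + green (m - 1) (j + 1) + green (m - 2) (j - 1) - green (m - 2) (j + 1)"
  using rec_op_green[of m j] by (simp add: rec_op_def)

text \<open>Each certificate below vanishes for n < 0, and rec_op of it is a combination of shifted
  impulses rec_op green whose polynomial coefficients vanish at the support of the impulse.\<close>

definition rec_certificate :: "int \<Rightarrow> int \<Rightarrow> real" where
  "rec_certificate n j = of_int n * green n j
     + (1 - 2 * of_int j - 2 * of_int n) * green (n - 1) j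
     + of_int j * green (n - 1) (j + 1)
     - 2 * of_int j * green (n - 2) (j - 1)
     + (2 * of_int j + of_int n - 1) * green (n - 2) j
     + 3 * of_int j * green (n - 3) (j - 1)
     + (6 + 2 * of_int j - 4 * of_int n) * green (n - 3) j
     - of_int j * green (n - 3) (j + 1)
     + (4 * of_int n - 8) * green (n - 4) j"

lemma rec_op_rec_certificate: "rec_op rec_certificate n j = 0"
proof -
  have "rec_op rec_certificate n j = of_int n * rec_op green n j
     + (2 - 2 * of_int j - 2 * of_int n) * rec_op green (n - 1) j
     + (1 + of_int j) * rec_op green (n - 1) (j + 1)
     + (2 - 2 * of_int j) * rec_op green (n - 2) (j - 1)
     + (2 * of_int j + of_int n - 2) * rec_op green (n - 2) j
     + (3 * of_int j - 3) * rec_op green (n - 3) (j - 1)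
     + (12 + 2 * of_int j - 4 * of_int n) * rec_op green (n - 3) j
     - (1 + of_int j) * rec_op green (n - 3) (j + 1)
     + (4 * of_int n - 16) * rec_op green (n - 4) j"
    unfolding rec_op_def rec_certificate_def by (simp add: algebra_simps)
  then show ?thesis by (auto simp: rec_op_green)
qed

lemma rec_certificate_eq_0: "rec_certificate n j = 0"
  by (rule rec_op_eq_0_imp_eq_0[OF _ rec_op_rec_certificate]) (simp add: rec_certificate_def green_neg)

text \<open>The impulse terms at the end repair the certificate near the origin; they vanish at j = 0
  for n \<ge> 2, where the certificate is used.\<close>

definition link_certificate :: "int \<Rightarrow> int \<Rightarrow> real" where
  "link_certificate n j = of_int n * green n j
     + (of_int j - 3 * of_int n) * green (n - 1) j
     + of_int j * (1 - of_int n) * green (n - 1) (j + 1)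
     + 2 * (of_int j - of_int n) * green (n - 2) (j - 1)
     + 2 * of_int n * green (n - 2) j
     + 2 * (of_int n - of_int j + of_int n * of_int j) * green (n - 2) (j + 1)
     + of_int n * of_int j * green (n - 2) (j + 2)
     + 2 * of_int n * green (n - 3) (j - 1)
     + of_int n * of_int j * green (n - 3) j
     - of_int n * (2 + of_int j) * green (n - 3) (j + 1)
     - 2 * of_int n * of_int j * green (n - 3) (j + 2)
     - of_int n * of_int j * green (n - 4) j
     + of_int n * of_int j * green (n - 4) (j + 2)
     - rec_op green (n - 1) (j + 1) + 2 * rec_op green (n - 1) j + 2 * rec_op green (n - 2) (j + 1)"

lemma rec_op_link_certificate: "rec_op link_certificate n j = 0"
proof -
  have "rec_op link_certificate n j = of_int n * rec_op green n j
     + (3 + of_int j - 3 * of_int n) * rec_op green (n - 1) j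
     + of_int j * (1 - of_int n) * rec_op green (n - 1) (j + 1)
     + (2 + 2 * of_int j - 2 * of_int n) * rec_op green (n - 2) (j - 1)
     + (2 * of_int n - 4) * rec_op green (n - 2) j
     + (2 * of_int n - 3) * (1 + of_int j) * rec_op green (n - 2) (j + 1)
     + (of_int n + of_int n * of_int j - of_int j) * rec_op green (n - 2) (j + 2)
     + (2 * of_int n - 6) * rec_op green (n - 3) (j - 1)
     + (3 - 2 * of_int j - of_int n + of_int n * of_int j) * rec_op green (n - 3) j
     + (4 + of_int j - 2 * of_int n - of_int n * of_int j) * rec_op green (n - 3) (j + 1)
     + (3 * of_int j - 2 * of_int n - 2 * of_int n * of_int j) * rec_op green (n - 3) (j + 2)
     + (2 * of_int j + of_int n - 4 - of_int n * of_int j) * rec_op green (n - 4) j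
     + (of_int n + of_int n * of_int j - 2 * of_int j) * rec_op green (n - 4) (j + 2)"
    unfolding rec_op_def link_certificate_def by (simp add: algebra_simps)
  then show ?thesis by (auto simp: rec_op_green)
qed

lemma link_certificate_eq_0: "link_certificate n j = 0"
  by (rule rec_op_eq_0_imp_eq_0[OF _ rec_op_link_certificate]) (simp add: link_certificate_def green_neg rec_op_green)

lemma green_center_rec:
  "of_int n * green n 0 + (1 - 2 * of_int n) * green (n - 1) 0 + (of_int n - 1) * green (n - 2) 0
   + (6 - 4 * of_int n) * green (n - 3) 0 + (4 * of_int n - 8) * green (n - 4) 0 = 0"
  using rec_certificate_eq_0[of n 0] by (simp add: rec_certificate_def)

lemma green_center_link:
  assumes "n \<ge> 2"
  shows "green n 0 - 3 * green (n - 1) 0 + 2 * green (n - 2) 0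
    = 2 * (green (n - 2) (-1) - green (n - 2) 1) - 2 * (green (n - 3) (-1) - green (n - 3) 1)"
proof -
  have "of_int n * (green n 0 - 3 * green (n - 1) 0 + 2 * green (n - 2) 0
      - 2 * (green (n - 2) (-1) - green (n - 2) 1) + 2 * (green (n - 3) (-1) - green (n - 3) 1)) = 0"
    using link_certificate_eq_0[of n 0] assms by (simp add: link_certificate_def rec_op_green algebra_simps)
  then show ?thesis using assms by simp
qed

lemma sum_lists_length_Suc:
  fixes f :: "'a::finite list \<Rightarrow> 'b::comm_monoid_add"
  shows "(\<Sum>xs | length xs = Suc n. f xs) = (\<Sum>x\<in>UNIV. \<Sum>xs | length xs = n. f (x # xs))"
proof -
  have "bij_betw (\<lambda>(x, xs). x # xs) (UNIV \<times> {xs. length xs = n}) {xs. length xs = Suc n}"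
    by (auto simp: bij_betw_def inj_on_def length_Suc_conv)
  from sum.reindex_bij_betw[OF this, of f]
  have "(\<Sum>xs | length xs = Suc n. f xs) = (\<Sum>(x, xs) \<in> UNIV \<times> {xs. length xs = n}. f (x # xs))"
    by (simp add: case_prod_unfold)
  also have "\<dots> = (\<Sum>x\<in>UNIV. \<Sum>xs | length xs = n. f (x # xs))"
    by (simp add: sum.cartesian_product)
  finally show ?thesis .
qed

lemma card_adjacent_Cons:
  "card {i. i + 1 < length (b # xs) \<and> P ((b # xs) ! i) ((b # xs) ! (i + 1))}
   = of_bool (xs \<noteq> [] \<and> P b (hd xs)) + card {i. i + 1 < length xs \<and> P (xs ! i) (xs ! (i + 1))}"
proof -
  let ?A = "{i. i + 1 < length xs \<and> P (xs ! i) (xs ! (i + 1))}"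
  have "{i. i + 1 < length (b # xs) \<and> P ((b # xs) ! i) ((b # xs) ! (i + 1))}
     = (if xs \<noteq> [] \<and> P b (hd xs) then {0} else {}) \<union> Suc ` ?A"
    by (rule set_eqI) (case_tac x; auto simp: hd_conv_nth)
  moreover have "finite ?A" by (rule finite_subset[of _ "{..<length xs}"]) auto
  ultimately show ?thesis by (auto simp: card_image)
qed

definition score_diff :: "bool list \<Rightarrow> int" where
  "score_diff xs = int (bob_score xs) - int (alice_score xs)"

lemma score_diff_Cons:
  "score_diff (b # xs) = score_diff xs + (if b \<and> xs \<noteq> [] then if hd xs then -1 else 1 else 0)"
  using card_adjacent_Cons[of b xs "\<lambda>u v. u \<and> v"] card_adjacent_Cons[of b xs "\<lambda>u v. u \<and> \<not> v"]
  by (auto simp: score_diff_def alice_score_def bob_score_def)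

lemma score_diff_Nil: "score_diff [] = 0"
  by (simp add: score_diff_def alice_score_def bob_score_def)

lemma score_diff_single: "score_diff [b] = 0"
  by (simp add: score_diff_def alice_score_def bob_score_def)

definition lead_count :: "bool \<Rightarrow> nat \<Rightarrow> int \<Rightarrow> real" where
  "lead_count b n j = (\<Sum>xs | length xs = n. of_bool (xs \<noteq> [] \<and> hd xs = b \<and> score_diff xs = j))"

definition sign_sum :: "nat \<Rightarrow> real" where
  "sign_sum n = (\<Sum>xs | length xs = n. of_int (sgn (score_diff xs)))"

lemma lead_count_1: "lead_count b (Suc 0) j = of_bool (j = 0)"
  by (simp add: lead_count_def sum_lists_length_Suc UNIV_bool score_diff_single)

lemma lead_count_True_Suc:
  assumes "n \<ge> 1"
  shows "lead_count True (Suc n) j = lead_count True n (j + 1) + lead_count False n (j - 1)"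
proof -
  have "lead_count True (Suc n) j = (\<Sum>xs | length xs = n. of_bool (score_diff (True # xs) = j))"
    by (simp add: lead_count_def sum_lists_length_Suc UNIV_bool)
  also have "\<dots> = lead_count True n (j + 1) + lead_count False n (j - 1)"
    unfolding lead_count_def sum.distrib[symmetric] using assms
    by (intro sum.cong) (auto simp: score_diff_Cons)
  finally show ?thesis .
qed

lemma lead_count_False_Suc:
  assumes "n \<ge> 1"
  shows "lead_count False (Suc n) j = lead_count True n j + lead_count False n j"
proof -
  have "lead_count False (Suc n) j = (\<Sum>xs | length xs = n. of_bool (score_diff xs = j))"
    by (simp add: lead_count_def sum_lists_length_Suc UNIV_bool score_diff_Cons)
  also have "\<dots> = lead_count True n j + lead_count False n j"
    unfolding lead_count_def sum.distrib[symmetric] using assms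
    by (intro sum.cong) auto
  finally show ?thesis .
qed

lemma sgn_add_1: "sgn (k + 1) = sgn k + of_bool (k = 0) + of_bool (k = -1)" for k :: int
  by (auto simp: sgn_if)

lemma sgn_diff_1: "sgn (k - 1) = sgn k - of_bool (k = 0) - of_bool (k = 1)" for k :: int
  by (auto simp: sgn_if)

lemma sign_sum_Suc:
  assumes "n \<ge> 1"
  shows "sign_sum (Suc n) = 2 * sign_sum n
    + lead_count False n 0 + lead_count False n (-1) - lead_count True n 0 - lead_count True n 1"
proof -
  have "sign_sum (Suc n) = sign_sum n + (\<Sum>xs | length xs = n. of_int (sgn (score_diff (True # xs))))"
    by (simp add: sign_sum_def sum_lists_length_Suc UNIV_bool score_diff_Cons)
  also have "(\<Sum>xs | length xs = n. of_int (sgn (score_diff (True # xs)))) =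
    (\<Sum>xs | length xs = n. of_int (sgn (score_diff xs))
      + of_bool (xs \<noteq> [] \<and> hd xs = False \<and> score_diff xs = 0)
      + of_bool (xs \<noteq> [] \<and> hd xs = False \<and> score_diff xs = -1)
      - of_bool (xs \<noteq> [] \<and> hd xs = True \<and> score_diff xs = 0)
      - of_bool (xs \<noteq> [] \<and> hd xs = True \<and> score_diff xs = 1) :: real)"
    using assms by (intro sum.cong) (auto simp: score_diff_Cons sgn_add_1 sgn_diff_1)
  finally show ?thesis
    unfolding sign_sum_def lead_count_def by (simp only: sum.distrib sum_subtractf)
qed

lemma Delta_eq_sign_sum: "Delta n = sign_sum n / 2 ^ n"
proof -
  have "sign_sum n = (\<Sum>xs | length xs = n. of_bool (score_diff xs > 0) - of_bool (score_diff xs < 0))"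
    unfolding sign_sum_def by (intro sum.cong) (auto simp: sgn_if)
  also have "\<dots> = real (card {xs. length xs = n \<and> bob_score xs > alice_score xs})
      - real (card {xs. length xs = n \<and> alice_score xs > bob_score xs})"
    by (simp add: sum_subtractf finite_list_length Int_def score_diff_def)
  finally show ?thesis by (simp add: Delta_def)
qed

lemma lead_count_eq_green:
  assumes "n \<ge> 1"
  shows "lead_count True n j = green (int n - 1) j + green (int n - 2) (j - 1) - green (int n - 2) j
    \<and> lead_count False n j = green (int n - 1) j + green (int n - 2) j - green (int n - 2) (j + 1)"
  using assms
proof (induction n arbitrary: j rule: dec_induct)
  case base
  then show ?case by (simp add: lead_count_1 green_def)
next
  case (step n)
  have "green (int n) j = green (int n - 1) j + green (int n - 1) (j + 1)
      + green (int n - 2) (j - 1) - green (int n - 2) (j + 1)"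
    "green (int n) (j - 1) = green (int n - 1) (j - 1) + green (int n - 1) j
      + green (int n - 2) (j - 2) - green (int n - 2) j"
    using green_rec[of "int n"] step.hyps by simp_all
  then show ?case
    using step.IH[of j] step.IH[of "j + 1"] step.IH[of "j - 1"]
    by (simp add: lead_count_True_Suc[OF step.hyps(1)] lead_count_False_Suc[OF step.hyps(1)] algebra_simps)
qed

lemma sign_sum_Suc_green:
  assumes "n \<ge> 1"
  shows "sign_sum (Suc n) = 2 * sign_sum n + green (int n - 1) (-1) - green (int n - 1) 1"
  using sign_sum_Suc[OF assms] lead_count_eq_green[OF assms] by simp

lemma sign_sum_eq_green: "2 * sign_sum n + 1 = green (int n) 0"
proof (induction n rule: induct_nat_012)
  case 0
  then show ?case by (simp add: sign_sum_def score_diff_Nil green_def)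
next
  case 1
  then show ?case by (simp add: sign_sum_def sum_lists_length_Suc UNIV_bool score_diff_single green_def)
next
  case (ge2 n)
  then show ?case
  proof (cases n)
    case 0
    then show ?thesis
      using sign_sum_Suc_green[of 1] ge2.IH(2) by (simp add: green_def numeral_2_eq_2)
  next
    case Suc
    have "green (int n + 2) 0 - 3 * green (int n + 1) 0 + 2 * green (int n) 0
      = 2 * (green (int n) (-1) - green (int n) 1) - 2 * (green (int n - 1) (-1) - green (int n - 1) 1)"
      using green_center_link[of "int n + 2"] by (simp add: algebra_simps)
    then show ?thesis
      using ge2.IH sign_sum_Suc_green[of "Suc n"] sign_sum_Suc_green[of n] Suc
      by (simp add: algebra_simps)
  qed
qed

lemma d_eq_green: "d m = green m 0 / 2"
proof (cases "m < 0")
  case False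
  then obtain k where "m = int k" by (metis nonneg_int_cases not_less)
  then show ?thesis using sign_sum_eq_green[of k] by (simp add: d_def Delta_eq_sign_sum)
qed (simp add: d_def green_def)

lemma d_rec:
  assumes "n \<ge> 1"
  shows "d (int n) - (2 - 1 / real n) * d (int n - 1) + (1 - 1 / real n) * d (int n - 2)
    - (4 - 6 / real n) * d (int n - 3) + (4 - 8 / real n) * d (int n - 4) = 0"
proof -
  have "2 * real n * (d (int n) - (2 - 1 / real n) * d (int n - 1) + (1 - 1 / real n) * d (int n - 2)
      - (4 - 6 / real n) * d (int n - 3) + (4 - 8 / real n) * d (int n - 4))
    = real n * green n 0 + (1 - 2 * real n) * green (int n - 1) 0 + (real n - 1) * green (int n - 2) 0
      + (6 - 4 * real n) * green (int n - 3) 0 + (4 * real n - 8) * green (int n - 4) 0"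
    unfolding d_eq_green using assms by (simp add: field_simps)
  also have "\<dots> = 0"
    using green_center_rec[of "int n"] by simp
  finally show ?thesis using assms by simp
qed

lemma Delta_rec:
  assumes "n \<ge> 4"
  shows "Delta n = 1 / (real n * 2 ^ n)
    + (1 / (2 * real n) - 1 / 4) * Delta (n - 4) + (1 / 2 - 3 / (4 * real n)) * Delta (n - 3)
    + (1 / (4 * real n) - 1 / 4) * Delta (n - 2) + (1 - 1 / (2 * real n)) * Delta (n - 1)"
proof -
  obtain m where m: "n = m + 4" using assms by (metis add.commute le_Suc_ex)
  have d_nat: "d (int k) = 2 ^ k * Delta k + 1 / 2" for k
    by (simp add: d_def)
  have idx: "int n - 1 = int (m + 3)" "int n - 2 = int (m + 2)" "int n - 3 = int (m + 1)" "int n - 4 = int m"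
    using m by auto
  have "(2 ^ n * Delta n + 1 / 2) - (2 - 1 / real n) * (2 ^ (m + 3) * Delta (m + 3) + 1 / 2)
      + (1 - 1 / real n) * (2 ^ (m + 2) * Delta (m + 2) + 1 / 2)
      - (4 - 6 / real n) * (2 ^ (m + 1) * Delta (m + 1) + 1 / 2)
      + (4 - 8 / real n) * (2 ^ m * Delta m + 1 / 2) = 0"
    using d_rec[of n] assms unfolding idx d_nat by simp
  moreover have "n - 1 = m + 3" "n - 2 = m + 2" "n - 3 = m + 1" "n - 4 = m"
    using m by auto
  moreover have "(2::real) ^ n = 16 * 2 ^ m" "(2::real) ^ (m + 3) = 8 * 2 ^ m"
    "(2::real) ^ (m + 2) = 4 * 2 ^ m" "(2::real) ^ (m + 1) = 2 * 2 ^ m"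
    using m by (simp_all add: power_add)
  ultimately show ?thesis
    using assms by (simp add: field_simps)
qed

theorem mainTheorem15:
  shows "(\<forall>n::nat. n \<ge> 1 \<longrightarrow>
            d (int n) - (2 - 1 / real n) * d (int n - 1) + (1 - 1 / real n) * d (int n - 2)
            - (4 - 6 / real n) * d (int n - 3) + (4 - 8 / real n) * d (int n - 4) = 0)
       \<and> (\<forall>n::nat. n \<ge> 4 \<longrightarrow>
            Delta n = 1 / (real n * 2 ^ n)
              + (1 / (2 * real n) - 1 / 4) * Delta (n - 4)
              + (1 / 2 - 3 / (4 * real n)) * Delta (n - 3)
              + (1 / (4 * real n) - 1 / 4) * Delta (n - 2)
              + (1 - 1 / (2 * real n)) * Delta (n - 1))"
  using d_rec Delta_rec by blast

end
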